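(* Let $n$ be a non-negative integer and $r,s\in\mathbb{C}\setminus\mathbb{Z}^{-}$ with $s\neq0$ and $r-s\notin\mathbb{Z}^{-}$. Then \[ \sum_{k=0}^{n}(-1)^{k+1}2^{2k}\frac{\binom{n+k}{n-k}}{(k+s)\binom{k+r}{k+s}}H_{k+r}=\sum_{k=0}^{n}(-1)^{n-k}\frac{\binom{2n+1}{2k+1}}{(n-k+s)\binom{n+r}{n-k+s}}\left(H_{k+r-s}-H_{n+r}-H_{r-s}\right). \]
   Context: $\mathbb{Z}^{-}$ denotes the set of negative integers. For complex $z$ not a negative integer, $H_z=\psi(z+1)+\gamma$ ($\psi$ the digamma function, $\gamma$ Euler's constant). Binomial coefficients with complex entries: $\binom{x}{y}=\frac{\Gamma(x+1)}{\Gamma(y+1)\Gamma(x-y+1)}$. *)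

theory Defs
  imports "HOL-Analysis.Analysis"
begin

text \<open>Generalised harmonic number H_z = psi(z+1) + gamma.\<close>
definition Hc :: "complex \<Rightarrow> complex" where
  "Hc z = Digamma (z + 1) + euler_mascheroni"

definition cbinom :: "complex \<Rightarrow> complex \<Rightarrow> complex" where
  "cbinom x y = Gamma (x + 1) / (Gamma (y + 1) * Gamma (x - y + 1))"

definition neg_int :: "complex \<Rightarrow> bool" where
  "neg_int z \<longleftrightarrow> (\<exists>m::nat. z = - of_nat (Suc m))"

end

theory Submission
  imports Defs
begin

text \<open>
  Put K = Gamma(s) Gamma(r-s+1) / Gamma(r+n+1). The Gamma function turns the left-hand weights into
  -K u_k with u_k = (-4)^k C(n+k, 2k) (s)_k (r+k+1)_(n-k), and the right-hand ones into K v_k with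
  v_k = (-1)^(n-k) C(2n+1, 2k+1) (s)_(n-k) (r-s+1)_k. As polynomials in r, the sums of the u_k
  and of the v_k agree: Vandermonde's convolution for Pochhammer symbols reduces this to the
  coefficient identity sum_k (-4)^k C(n+k, 2k) C(n-k, m-k) = (-1)^m C(2n+1, 2m), that is, to
  sum_k C(n+k, 2k) (-4X)^k (1+X)^(n-k) = sum_m (-1)^m C(2n+1, 2m) X^m, a Morgan-Voyce polynomial
  identity which for X = -x^2 is the even part of the binomial expansion of (1+x)^(2n+1).
  Differentiating in r, with (z)_m' = (z)_m (psi(z+m) - psi(z)), weights the same sums by
  H_(n+r) - H_(k+r) and H_(k+r-s) - H_(r-s) respectively; subtracting H_(n+r) times the
  undifferentiated identity gives the theorem.
\<close>

text \<open>Homogenised Morgan-Voyce polynomials: w^n b_n(z/w) and w^n B_n(z/w).\<close>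

definition morgan_voyce_b :: "nat \<Rightarrow> 'a::comm_semiring_1 \<Rightarrow> 'a \<Rightarrow> 'a" where
  "morgan_voyce_b n z w = (\<Sum>k\<le>n. of_nat ((n + k) choose (2 * k)) * z ^ k * w ^ (n - k))"

definition morgan_voyce_B :: "nat \<Rightarrow> 'a::comm_semiring_1 \<Rightarrow> 'a \<Rightarrow> 'a" where
  "morgan_voyce_B n z w = (\<Sum>k\<le>n. of_nat ((n + k + 1) choose (2 * k + 1)) * z ^ k * w ^ (n - k))"

lemma morgan_voyce_b_Suc:
  "morgan_voyce_b (Suc n) z w = w * morgan_voyce_b n z w + z * morgan_voyce_B n z w"
proof -
  have "morgan_voyce_b (Suc n) z w = w ^ Suc n
      + (\<Sum>k\<le>n. of_nat ((n + k + 1) choose (2 * k + 2)) * z ^ Suc k * w ^ (n - k))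
      + (\<Sum>k\<le>n. of_nat ((n + k + 1) choose (2 * k + 1)) * z ^ Suc k * w ^ (n - k))"
    unfolding morgan_voyce_b_def
    by (subst sum.atMost_Suc_shift) (simp add: distrib_right sum.distrib add_ac)
  moreover have "w * morgan_voyce_b n z w = w ^ Suc n
      + (\<Sum>k\<le>n. of_nat ((n + k + 1) choose (2 * k + 2)) * z ^ Suc k * w ^ (n - k))"
  proof -
    have "w * morgan_voyce_b n z w
        = (\<Sum>k\<le>Suc n. of_nat ((n + k) choose (2 * k)) * z ^ k * w ^ (Suc n - k))"
      by (simp add: morgan_voyce_b_def sum_distrib_left Suc_diff_le mult_ac binomial_eq_0)
    then show ?thesis
      by (subst (asm) sum.atMost_Suc_shift) (simp add: numeral_2_eq_2)
  qed
  moreover have "z * morgan_voyce_B n z w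
      = (\<Sum>k\<le>n. of_nat ((n + k + 1) choose (2 * k + 1)) * z ^ Suc k * w ^ (n - k))"
    by (simp add: morgan_voyce_B_def sum_distrib_left mult_ac)
  ultimately show ?thesis
    by simp
qed

lemma morgan_voyce_B_Suc:
  "morgan_voyce_B (Suc n) z w = morgan_voyce_b (Suc n) z w + w * morgan_voyce_B n z w"
proof -
  have "w * morgan_voyce_B n z w
      = (\<Sum>k\<le>Suc n. of_nat ((n + k + 1) choose (2 * k + 1)) * z ^ k * w ^ (Suc n - k))"
    by (simp add: morgan_voyce_B_def sum_distrib_left Suc_diff_le mult_ac binomial_eq_0)
  moreover have "(Suc n + k + 1) choose (2 * k + 1)
      = ((Suc n + k) choose (2 * k)) + ((n + k + 1) choose (2 * k + 1))" for k
    by simp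
  ultimately show ?thesis
    by (simp add: morgan_voyce_B_def morgan_voyce_b_def distrib_right sum.distrib)
qed

lemma morgan_voyce_at_square:
  fixes x :: "'a::comm_ring_1"
  shows "2 * morgan_voyce_b n (4 * x\<^sup>2) (1 - x\<^sup>2) = (1 + x) ^ (2 * n + 1) + (1 - x) ^ (2 * n + 1)"
    and "4 * x * morgan_voyce_B n (4 * x\<^sup>2) (1 - x\<^sup>2) = (1 + x) ^ (2 * n + 2) - (1 - x) ^ (2 * n + 2)"
proof (induction n)
  case 0
  show "2 * morgan_voyce_b 0 (4 * x\<^sup>2) (1 - x\<^sup>2) = (1 + x) ^ (2 * 0 + 1) + (1 - x) ^ (2 * 0 + 1)"
    by (simp add: morgan_voyce_b_def)
  show "4 * x * morgan_voyce_B 0 (4 * x\<^sup>2) (1 - x\<^sup>2) = (1 + x) ^ (2 * 0 + 2) - (1 - x) ^ (2 * 0 + 2)"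
    by (simp add: morgan_voyce_B_def algebra_simps power2_eq_square)
next
  case (Suc n)
  define P where "P = (1 + x) ^ (2 * n + 1)"
  define Q where "Q = (1 - x) ^ (2 * n + 1)"
  have b: "2 * morgan_voyce_b n (4 * x\<^sup>2) (1 - x\<^sup>2) = P + Q"
    and B: "4 * x * morgan_voyce_B n (4 * x\<^sup>2) (1 - x\<^sup>2) = (1 + x) * P - (1 - x) * Q"
    using Suc.IH by (simp_all add: P_def Q_def)
  have b': "2 * morgan_voyce_b (Suc n) (4 * x\<^sup>2) (1 - x\<^sup>2) = (1 + x)\<^sup>2 * P + (1 - x)\<^sup>2 * Q"
  proof -
    have "2 * morgan_voyce_b (Suc n) (4 * x\<^sup>2) (1 - x\<^sup>2)
        = (1 - x\<^sup>2) * (P + Q) + 2 * x * ((1 + x) * P - (1 - x) * Q)"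
      by (simp add: morgan_voyce_b_Suc flip: b B) (simp add: algebra_simps power2_eq_square)
    then show ?thesis
      by (simp add: algebra_simps power2_eq_square)
  qed
  have "2 * Suc n + 1 = 2 + (2 * n + 1)" "2 * Suc n + 2 = 3 + (2 * n + 1)"
    by simp_all
  then have powers: "(1 + x) ^ (2 * Suc n + 1) = (1 + x)\<^sup>2 * P" "(1 - x) ^ (2 * Suc n + 1) = (1 - x)\<^sup>2 * Q"
      "(1 + x) ^ (2 * Suc n + 2) = (1 + x) ^ 3 * P" "(1 - x) ^ (2 * Suc n + 2) = (1 - x) ^ 3 * Q"
    unfolding P_def Q_def by (simp_all only: power_add)
  show "2 * morgan_voyce_b (Suc n) (4 * x\<^sup>2) (1 - x\<^sup>2) = (1 + x) ^ (2 * Suc n + 1) + (1 - x) ^ (2 * Suc n + 1)"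
    by (simp only: b' powers)
  have "4 * x * morgan_voyce_B (Suc n) (4 * x\<^sup>2) (1 - x\<^sup>2)
      = 2 * x * ((1 + x)\<^sup>2 * P + (1 - x)\<^sup>2 * Q) + (1 - x\<^sup>2) * ((1 + x) * P - (1 - x) * Q)"
    by (simp add: morgan_voyce_B_Suc flip: b' B) (simp add: algebra_simps)
  also have "\<dots> = (1 + x) ^ 3 * P - (1 - x) ^ 3 * Q"
    by (simp add: algebra_simps power2_eq_square power3_eq_cube)
  finally show "4 * x * morgan_voyce_B (Suc n) (4 * x\<^sup>2) (1 - x\<^sup>2) = (1 + x) ^ (2 * Suc n + 2) - (1 - x) ^ (2 * Suc n + 2)"
    by (simp only: powers)
qed

lemma sum_lessThan_double:
  fixes h :: "nat \<Rightarrow> 'a::comm_monoid_add"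
  shows "(\<Sum>k<2 * m. h k) = (\<Sum>i<m. h (2 * i) + h (2 * i + 1))"
  by (induction m) (simp_all add: add.assoc)

lemma binomial_even_part:
  fixes x :: "'a::comm_ring_1"
  shows "2 * (\<Sum>i\<le>n. of_nat ((2 * n + 1) choose (2 * i)) * x ^ (2 * i))
    = (1 + x) ^ (2 * n + 1) + (1 - x) ^ (2 * n + 1)"
proof -
  have "(1 + x) ^ (2 * n + 1) + (1 - x) ^ (2 * n + 1)
      = (\<Sum>k<2 * Suc n. of_nat ((2 * n + 1) choose k) * (x ^ k + (- x) ^ k))"
    using binomial_ring[of x 1 "2 * n + 1"] binomial_ring[of "- x" 1 "2 * n + 1"]
    by (simp add: add.commute lessThan_Suc_atMost distrib_left sum.distrib)
  also have "\<dots> = (\<Sum>i<Suc n. 2 * (of_nat ((2 * n + 1) choose (2 * i)) * x ^ (2 * i)))"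
    by (simp add: sum_lessThan_double power_minus_odd mult.left_commute)
  finally show ?thesis
    by (simp add: sum_distrib_left lessThan_Suc_atMost)
qed

lemma morgan_voyce_b_minus_four:
  fixes X :: complex
  shows "morgan_voyce_b n (- 4 * X) (1 + X) = (\<Sum>i\<le>n. (- 1) ^ i * of_nat ((2 * n + 1) choose (2 * i)) * X ^ i)"
proof -
  define x where "x = \<i> * csqrt X"
  have X: "X = - x\<^sup>2"
    by (simp add: x_def power_mult_distrib)
  have "2 * morgan_voyce_b n (- 4 * X) (1 + X) = 2 * (\<Sum>i\<le>n. of_nat ((2 * n + 1) choose (2 * i)) * x ^ (2 * i))"
    unfolding binomial_even_part morgan_voyce_at_square(1)[symmetric] X by simp
  moreover have "x ^ (2 * i) = (- 1) ^ i * X ^ i" for i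
    by (simp add: X power_mult flip: power_mult_distrib)
  ultimately show ?thesis
    by (simp add: mult_ac)
qed

lemma sum_atMost_triangle_swap:
  fixes f :: "nat \<Rightarrow> nat \<Rightarrow> 'a::comm_monoid_add"
  shows "(\<Sum>k\<le>n. \<Sum>m=k..n. f k m) = (\<Sum>m\<le>n. \<Sum>k\<le>m. f k m)"
  by (induction n) (simp_all add: sum.distrib add_ac)

lemma sum_binomial_shift_swap:
  fixes a g :: "nat \<Rightarrow> 'a::comm_semiring_1"
  shows "(\<Sum>k\<le>n. a k * (\<Sum>j\<le>n - k. of_nat ((n - k) choose j) * g (j + k)))
    = (\<Sum>m\<le>n. (\<Sum>k\<le>m. a k * of_nat ((n - k) choose (m - k))) * g m)"
proof -
  have "(\<Sum>j\<le>n - k. of_nat ((n - k) choose j) * g (j + k)) = (\<Sum>m=k..n. of_nat ((n - k) choose (m - k)) * g m)"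
    if "k \<le> n" for k
    using sum.shift_bounds_cl_nat_ivl[of "\<lambda>m. of_nat ((n - k) choose (m - k)) * g m" 0 k "n - k"] that
    by (simp add: atLeast0AtMost)
  then show ?thesis
    by (simp add: sum_distrib_left sum_distrib_right mult.assoc flip: sum_atMost_triangle_swap)
qed

lemma binomial_power_expansion:
  fixes X :: "'a::comm_semiring_1"
  assumes "k \<le> n"
  shows "X ^ k * (1 + X) ^ (n - k) = (\<Sum>j\<le>n - k. of_nat ((n - k) choose j) * X ^ (j + k))"
  using binomial_ring[of X 1 "n - k"]
  by (simp add: add.commute sum_distrib_left power_add mult_ac)

lemma sum_binomial_convolution_minus_four:
  assumes "m \<le> n"
  shows "(\<Sum>k\<le>m. (- 4) ^ k * int ((n + k) choose (2 * k)) * int ((n - k) choose (m - k)))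
    = (- 1) ^ m * int ((2 * n + 1) choose (2 * m))"
proof -
  define c :: "nat \<Rightarrow> complex"
    where "c m = (\<Sum>k\<le>m. (- 4) ^ k * of_nat ((n + k) choose (2 * k)) * of_nat ((n - k) choose (m - k)))" for m
  have "(\<Sum>m\<le>n. c m * X ^ m) = (\<Sum>m\<le>n. ((- 1) ^ m * of_nat ((2 * n + 1) choose (2 * m))) * X ^ m)" for X
  proof -
    have "(\<Sum>m\<le>n. c m * X ^ m)
        = (\<Sum>k\<le>n. (- 4) ^ k * of_nat ((n + k) choose (2 * k)) * (\<Sum>j\<le>n - k. of_nat ((n - k) choose j) * X ^ (j + k)))"
      unfolding c_def by (rule sum_binomial_shift_swap[symmetric])
    also have "\<dots> = (\<Sum>k\<le>n. (- 4) ^ k * of_nat ((n + k) choose (2 * k)) * (X ^ k * (1 + X) ^ (n - k)))"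
      by (simp add: binomial_power_expansion)
    also have "\<dots> = morgan_voyce_b n (- 4 * X) (1 + X)"
      unfolding morgan_voyce_b_def power_mult_distrib by (simp add: mult_ac)
    also have "\<dots> = (\<Sum>m\<le>n. (- 1) ^ m * of_nat ((2 * n + 1) choose (2 * m)) * X ^ m)"
      by (rule morgan_voyce_b_minus_four)
    finally show ?thesis .
  qed
  then have "c m = (- 1) ^ m * of_nat ((2 * n + 1) choose (2 * m))"
    using polyfun_eq_coeffs[of c n "\<lambda>m. (- 1) ^ m * of_nat ((2 * n + 1) choose (2 * m))"] assms
    by blast
  then have "of_int (\<Sum>k\<le>m. (- 4) ^ k * int ((n + k) choose (2 * k)) * int ((n - k) choose (m - k)))
      = (of_int ((- 1) ^ m * int ((2 * n + 1) choose (2 * m))) :: complex)"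
    by (simp add: c_def)
  then show ?thesis
    by (simp only: of_int_eq_iff)
qed

lemma pochhammer_shift_expansion:
  fixes s \<rho> :: "'a::comm_ring_1"
  assumes "k \<le> n"
  shows "pochhammer s k * pochhammer (\<rho> + of_nat k + 1) (n - k)
    = (\<Sum>j\<le>n - k. of_nat ((n - k) choose j) * (pochhammer s (j + k) * pochhammer (\<rho> - s + 1) (n - (j + k))))"
proof -
  have "\<rho> + of_nat k + 1 = (s + of_nat k) + (\<rho> - s + 1)"
    by simp
  then have "pochhammer (\<rho> + of_nat k + 1) (n - k)
      = (\<Sum>j\<le>n - k. of_nat ((n - k) choose j) * pochhammer (s + of_nat k) j * pochhammer (\<rho> - s + 1) (n - k - j))"
    by (simp only: pochhammer_binomial_sum)
  moreover have "pochhammer s k * (c * pochhammer (s + of_nat k) j * p) = c * (pochhammer s (j + k) * p)" for c p j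
    using pochhammer_product'[of s k j] by (simp add: add.commute mult_ac)
  ultimately show ?thesis
    by (simp add: sum_distrib_left diff_diff_add add.commute[of k])
qed

lemma pochhammer_morgan_voyce_identity:
  fixes s \<rho> :: "'a::comm_ring_1"
  shows "(\<Sum>k\<le>n. (- 4) ^ k * of_nat ((n + k) choose (2 * k))
            * pochhammer s k * pochhammer (\<rho> + of_nat k + 1) (n - k))
       = (\<Sum>k\<le>n. (- 1) ^ (n - k) * of_nat ((2 * n + 1) choose (2 * k + 1))
            * pochhammer s (n - k) * pochhammer (\<rho> - s + 1) k)"
proof -
  have convolution: "(\<Sum>k\<le>m. (- 4) ^ k * of_nat ((n + k) choose (2 * k)) * of_nat ((n - k) choose (m - k)))
      = ((- 1) ^ m * of_nat ((2 * n + 1) choose (2 * m)) :: 'a)" if "m \<le> n" for m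
    using arg_cong[OF sum_binomial_convolution_minus_four[OF that], of of_int] by simp
  have "(\<Sum>k\<le>n. (- 4) ^ k * of_nat ((n + k) choose (2 * k))
          * pochhammer s k * pochhammer (\<rho> + of_nat k + 1) (n - k))
      = (\<Sum>k\<le>n. (- 4) ^ k * of_nat ((n + k) choose (2 * k))
          * (\<Sum>j\<le>n - k. of_nat ((n - k) choose j)
              * (pochhammer s (j + k) * pochhammer (\<rho> - s + 1) (n - (j + k)))))"
    by (simp add: pochhammer_shift_expansion mult.assoc)
  also have "\<dots> = (\<Sum>m\<le>n. (- 1) ^ m * of_nat ((2 * n + 1) choose (2 * m))
      * (pochhammer s m * pochhammer (\<rho> - s + 1) (n - m)))"
    by (subst sum_binomial_shift_swap) (simp add: convolution)
  also have "\<dots> = (\<Sum>k\<le>n. (- 1) ^ (n - k) * of_nat ((2 * n + 1) choose (2 * k + 1))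
      * pochhammer s (n - k) * pochhammer (\<rho> - s + 1) k)"
  proof (rule sum.reindex_bij_witness[of _ "\<lambda>k. n - k" "\<lambda>k. n - k"])
    fix m
    assume "m \<in> {..n}"
    then have "2 * n + 1 - (2 * (n - m) + 1) = 2 * m"
      by simp
    then have "(2 * n + 1) choose (2 * (n - m) + 1) = (2 * n + 1) choose (2 * m)"
      using binomial_symmetric[of "2 * (n - m) + 1" "2 * n + 1"] by simp
    then show "(- 1) ^ (n - (n - m)) * of_nat ((2 * n + 1) choose (2 * (n - m) + 1))
          * pochhammer s (n - (n - m)) * pochhammer (\<rho> - s + 1) (n - m)
        = (- 1) ^ m * of_nat ((2 * n + 1) choose (2 * m)) * (pochhammer s m * pochhammer (\<rho> - s + 1) (n - m))"
      using \<open>m \<in> {..n}\<close> by (simp add: mult.assoc)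
  qed auto
  finally show ?thesis .
qed

lemma add_of_nat_notin_nonpos_Ints:
  assumes "z \<notin> \<int>\<^sub>\<le>\<^sub>0"
  shows "z + of_nat k \<notin> \<int>\<^sub>\<le>\<^sub>0"
  using nonpos_Ints_diff_Nats[of "z + of_nat k" "of_nat k"] assms by auto

lemma has_field_derivative_pochhammer [derivative_intros]:
  fixes f :: "complex \<Rightarrow> complex"
  assumes f: "(f has_field_derivative f') (at x)" and fx: "f x \<notin> \<int>\<^sub>\<le>\<^sub>0"
  shows "((\<lambda>x. pochhammer (f x) m) has_field_derivative
           f' * pochhammer (f x) m * (Digamma (f x + of_nat m) - Digamma (f x))) (at x)"
proof (induction m)
  case 0
  show ?case
    by simp
next
  case (Suc m)
  have nonzero: "f x + of_nat m \<noteq> 0"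
    using add_of_nat_notin_nonpos_Ints[OF fx, of m] by auto
  have "Digamma (f x + of_nat (Suc m)) = Digamma (f x + of_nat m) + 1 / (f x + of_nat m)"
    using Digamma_plus1[OF nonzero] by (simp add: add_ac)
  moreover have "f' * p * (d - Digamma (f x)) * a + f' * p = f' * (p * a) * (d + 1 / a - Digamma (f x))"
    if "a \<noteq> 0" for p a d
    using that by (simp add: field_simps)
  ultimately have derivative_eq:
    "f' * pochhammer (f x) m * (Digamma (f x + of_nat m) - Digamma (f x)) * (f x + of_nat m)
        + f' * pochhammer (f x) m
      = f' * pochhammer (f x) (Suc m) * (Digamma (f x + of_nat (Suc m)) - Digamma (f x))"
    using nonzero by (simp add: pochhammer_Suc mult.commute[of _ f'])
  have "((\<lambda>x. f x + of_nat m) has_field_derivative f') (at x)"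
    using DERIV_add[OF f DERIV_const] by simp
  from DERIV_mult[OF Suc this] show ?case
    unfolding pochhammer_Suc derivative_eq .
qed

lemma pochhammer_morgan_voyce_harmonic_identity:
  fixes r s :: complex
  assumes r: "r + 1 \<notin> \<int>\<^sub>\<le>\<^sub>0" and rs: "r - s + 1 \<notin> \<int>\<^sub>\<le>\<^sub>0"
  shows "(\<Sum>k\<le>n. (- 4) ^ k * of_nat ((n + k) choose (2 * k))
            * pochhammer s k * pochhammer (r + of_nat k + 1) (n - k)
            * (Hc (of_nat n + r) - Hc (of_nat k + r)))
       = (\<Sum>k\<le>n. (- 1) ^ (n - k) * of_nat ((2 * n + 1) choose (2 * k + 1))
            * pochhammer s (n - k) * pochhammer (r - s + 1) k
            * (Hc (of_nat k + r - s) - Hc (r - s)))"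
proof -
  define L where "L \<rho> = (\<Sum>k\<le>n. (- 4) ^ k * of_nat ((n + k) choose (2 * k))
      * pochhammer s k * pochhammer (\<rho> + of_nat k + 1) (n - k))" for \<rho>
  define R where "R \<rho> = (\<Sum>k\<le>n. (- 1) ^ (n - k) * of_nat ((2 * n + 1) choose (2 * k + 1))
      * pochhammer s (n - k) * pochhammer (\<rho> - s + 1) k)" for \<rho>
  have "r + 1 + of_nat k \<notin> \<int>\<^sub>\<le>\<^sub>0" for k
    using add_of_nat_notin_nonpos_Ints[OF r] .
  then have "(L has_field_derivative
      (\<Sum>k\<le>n. (- 4) ^ k * of_nat ((n + k) choose (2 * k))
            * pochhammer s k * pochhammer (r + of_nat k + 1) (n - k)
            * (Hc (of_nat n + r) - Hc (of_nat k + r)))) (at r)"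
    unfolding L_def
    by (intro DERIV_sum) (auto intro!: derivative_eq_intros simp: Hc_def add_ac of_nat_diff)
  moreover have "(R has_field_derivative
      (\<Sum>k\<le>n. (- 1) ^ (n - k) * of_nat ((2 * n + 1) choose (2 * k + 1))
            * pochhammer s (n - k) * pochhammer (r - s + 1) k
            * (Hc (of_nat k + r - s) - Hc (r - s)))) (at r)"
    unfolding R_def using rs
    by (intro DERIV_sum) (auto intro!: derivative_eq_intros simp: Hc_def algebra_simps)
  moreover have "L = R"
    unfolding L_def R_def by (rule ext pochhammer_morgan_voyce_identity)+
  ultimately show ?thesis
    using DERIV_unique by blast
qed

lemma neg_int_iff: "neg_int z \<longleftrightarrow> z + 1 \<in> \<int>\<^sub>\<le>\<^sub>0"
proof
  assume "neg_int z"
  then obtain m where "z = - of_nat (Suc m)"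
    by (auto simp: neg_int_def)
  then show "z + 1 \<in> \<int>\<^sub>\<le>\<^sub>0"
    by simp
next
  assume "z + 1 \<in> \<int>\<^sub>\<le>\<^sub>0"
  then obtain m where "z + 1 = - of_nat m"
    by (elim nonpos_Ints_cases')
  then have "z = - of_nat m - 1"
    by (simp add: eq_diff_eq)
  then have "z = - of_nat (Suc m)"
    by simp
  then show "neg_int z"
    by (auto simp: neg_int_def)
qed

lemma nonpos_Ints_iff_neg_int: "z \<in> \<int>\<^sub>\<le>\<^sub>0 \<longleftrightarrow> z = 0 \<or> neg_int z"
proof
  assume "z \<in> \<int>\<^sub>\<le>\<^sub>0"
  then obtain m where "z = - of_nat m"
    by (elim nonpos_Ints_cases')
  then show "z = 0 \<or> neg_int z"
    by (cases m) (auto simp: neg_int_def)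
qed (auto simp: neg_int_iff intro: plus_one_in_nonpos_Ints_imp)

lemma reciprocal_mult_cbinom:
  assumes "y \<notin> \<int>\<^sub>\<le>\<^sub>0"
  shows "1 / (y * cbinom x y) = Gamma y * Gamma (x - y + 1) / Gamma (x + 1)"
  using assms by (simp add: cbinom_def Gamma_plus1)

lemma left_coefficient_pochhammer:
  fixes r s :: complex
  assumes "k \<le> n" and s: "s \<notin> \<int>\<^sub>\<le>\<^sub>0" and r: "r + 1 \<notin> \<int>\<^sub>\<le>\<^sub>0"
  shows "(- 1) ^ (k + 1) * 2 ^ (2 * k) * of_nat ((n + k) choose (n - k))
           / ((of_nat k + s) * cbinom (of_nat k + r) (of_nat k + s))
       = - (Gamma s * Gamma (r - s + 1) / Gamma (r + of_nat n + 1))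
           * ((- 4) ^ k * of_nat ((n + k) choose (2 * k)) * pochhammer s k * pochhammer (r + of_nat k + 1) (n - k))"
    (is "_ = ?rhs")
proof -
  have binomial: "(n + k) choose (n - k) = (n + k) choose (2 * k)"
    using binomial_symmetric[of "n - k" "n + k"] \<open>k \<le> n\<close> by (simp add: mult_2)
  have sign: "(- 1) ^ (k + 1) * 2 ^ (2 * k) = - ((- 4) ^ k :: complex)"
    by (simp add: power_mult flip: power_mult_distrib)
  have "1 / ((of_nat k + s) * cbinom (of_nat k + r) (of_nat k + s))
      = Gamma (of_nat k + s) * Gamma (of_nat k + r - (of_nat k + s) + 1) / Gamma (of_nat k + r + 1)"
    using add_of_nat_notin_nonpos_Ints[OF s, of k] by (simp add: reciprocal_mult_cbinom add.commute)
  also have "\<dots> = Gamma (s + of_nat k) * Gamma (r - s + 1) / Gamma (r + of_nat k + 1)"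
    by (simp add: add_ac)
  finally have reciprocal: "1 / ((of_nat k + s) * cbinom (of_nat k + r) (of_nat k + s)) = \<dots>" .
  have "r + of_nat k + 1 + of_nat (n - k) = r + of_nat n + 1"
    using \<open>k \<le> n\<close> by (simp add: of_nat_diff)
  then have pochhammer_r: "pochhammer (r + of_nat k + 1) (n - k) = Gamma (r + of_nat n + 1) / Gamma (r + of_nat k + 1)"
    using pochhammer_Gamma[of "r + of_nat k + 1" "n - k"] add_of_nat_notin_nonpos_Ints[OF r, of k]
    by (simp add: add_ac)
  have nonzero: "Gamma s \<noteq> 0" "Gamma (r + of_nat n + 1) \<noteq> 0"
    using s add_of_nat_notin_nonpos_Ints[OF r, of n] by (simp_all add: Gamma_nonzero add_ac)
  have "(- 1) ^ (k + 1) * 2 ^ (2 * k) * of_nat ((n + k) choose (n - k))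
      / ((of_nat k + s) * cbinom (of_nat k + r) (of_nat k + s))
    = - ((- 4) ^ k * of_nat ((n + k) choose (2 * k))) * (1 / ((of_nat k + s) * cbinom (of_nat k + r) (of_nat k + s)))"
    unfolding binomial sign by simp
  also have "\<dots> = - ((- 4) ^ k * of_nat ((n + k) choose (2 * k)))
      * (Gamma (s + of_nat k) * Gamma (r - s + 1) / Gamma (r + of_nat k + 1))"
    unfolding reciprocal ..
  also have "\<dots> = ?rhs"
    unfolding pochhammer_Gamma[OF s] pochhammer_r using nonzero by (simp add: field_simps)
  finally show ?thesis .
qed

lemma right_coefficient_pochhammer:
  fixes r s :: complex
  assumes "k \<le> n" and s: "s \<notin> \<int>\<^sub>\<le>\<^sub>0" and rs: "r - s + 1 \<notin> \<int>\<^sub>\<le>\<^sub>0"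
  shows "(- 1) ^ (n - k) * of_nat ((2 * n + 1) choose (2 * k + 1))
           / ((of_nat (n - k) + s) * cbinom (of_nat n + r) (of_nat (n - k) + s))
       = Gamma s * Gamma (r - s + 1) / Gamma (r + of_nat n + 1)
           * ((- 1) ^ (n - k) * of_nat ((2 * n + 1) choose (2 * k + 1)) * pochhammer s (n - k) * pochhammer (r - s + 1) k)"
    (is "_ = ?rhs")
proof -
  have "1 / ((of_nat (n - k) + s) * cbinom (of_nat n + r) (of_nat (n - k) + s))
      = Gamma (of_nat (n - k) + s) * Gamma (of_nat n + r - (of_nat (n - k) + s) + 1) / Gamma (of_nat n + r + 1)"
    using add_of_nat_notin_nonpos_Ints[OF s, of "n - k"] by (simp add: reciprocal_mult_cbinom add.commute)
  also have "of_nat n + r - (of_nat (n - k) + s) + 1 = r - s + 1 + of_nat k"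
    using \<open>k \<le> n\<close> by (simp add: of_nat_diff)
  finally have reciprocal: "1 / ((of_nat (n - k) + s) * cbinom (of_nat n + r) (of_nat (n - k) + s))
      = Gamma (s + of_nat (n - k)) * Gamma (r - s + 1 + of_nat k) / Gamma (r + of_nat n + 1)"
    by (simp add: add_ac)
  have nonzero: "Gamma s \<noteq> 0" "Gamma (r - s + 1) \<noteq> 0"
    using s rs by (simp_all add: Gamma_nonzero)
  have "(- 1) ^ (n - k) * of_nat ((2 * n + 1) choose (2 * k + 1))
      / ((of_nat (n - k) + s) * cbinom (of_nat n + r) (of_nat (n - k) + s))
    = (- 1) ^ (n - k) * of_nat ((2 * n + 1) choose (2 * k + 1))
      * (1 / ((of_nat (n - k) + s) * cbinom (of_nat n + r) (of_nat (n - k) + s)))"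
    by simp
  also have "\<dots> = (- 1) ^ (n - k) * of_nat ((2 * n + 1) choose (2 * k + 1))
      * (Gamma (s + of_nat (n - k)) * Gamma (r - s + 1 + of_nat k) / Gamma (r + of_nat n + 1))"
    unfolding reciprocal ..
  also have "\<dots> = ?rhs"
    unfolding pochhammer_Gamma[OF s] pochhammer_Gamma[OF rs] using nonzero
    by (cases "Gamma (r + of_nat n + 1) = 0") (simp_all add: field_simps)
  finally show ?thesis .
qed

theorem theorem31:
  fixes n :: nat and r s :: complex
  assumes "\<not> neg_int r" and "\<not> neg_int s" and "s \<noteq> 0" and "\<not> neg_int (r - s)"
  shows "(\<Sum>k=0..n. (-1)^(k+1) * 2^(2*k) * of_nat ((n+k) choose (n-k))
            / ((of_nat k + s) * cbinom (of_nat k + r) (of_nat k + s)) * Hc (of_nat k + r))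
       = (\<Sum>k=0..n. (-1)^(n-k) * of_nat ((2*n+1) choose (2*k+1))
            / ((of_nat (n-k) + s) * cbinom (of_nat n + r) (of_nat (n-k) + s))
            * (Hc (of_nat k + r - s) - Hc (of_nat n + r) - Hc (r - s)))"
proof -
  have s: "s \<notin> \<int>\<^sub>\<le>\<^sub>0"
    using assms(2,3) by (simp add: nonpos_Ints_iff_neg_int)
  have r: "r + 1 \<notin> \<int>\<^sub>\<le>\<^sub>0" and rs: "r - s + 1 \<notin> \<int>\<^sub>\<le>\<^sub>0"
    using assms(1,4) by (simp_all add: neg_int_iff)
  define K where "K = Gamma s * Gamma (r - s + 1) / Gamma (r + of_nat n + 1)"
  define H where "H = Hc (of_nat n + r)"
  define u where "u k = (- 4) ^ k * of_nat ((n + k) choose (2 * k))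
      * pochhammer s k * pochhammer (r + of_nat k + 1) (n - k)" for k
  define v where "v k = (- 1) ^ (n - k) * of_nat ((2 * n + 1) choose (2 * k + 1))
      * pochhammer s (n - k) * pochhammer (r - s + 1) k" for k
  have "(\<Sum>k=0..n. (-1)^(k+1) * 2^(2*k) * of_nat ((n+k) choose (n-k))
            / ((of_nat k + s) * cbinom (of_nat k + r) (of_nat k + s)) * Hc (of_nat k + r))
      = (\<Sum>k\<le>n. - K * u k * Hc (of_nat k + r))"
    unfolding atLeast0AtMost K_def u_def
    by (intro sum.cong refl, subst left_coefficient_pochhammer) (use s r in auto)
  also have "\<dots> = K * ((\<Sum>k\<le>n. u k * (H - Hc (of_nat k + r))) - H * (\<Sum>k\<le>n. u k))"
    by (simp add: sum_distrib_left sum_subtractf sum_negf algebra_simps)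
  also have "\<dots> = K * ((\<Sum>k\<le>n. v k * (Hc (of_nat k + r - s) - Hc (r - s))) - H * (\<Sum>k\<le>n. v k))"
    using pochhammer_morgan_voyce_harmonic_identity[OF r rs, of n] pochhammer_morgan_voyce_identity[of n s r]
    by (simp add: u_def v_def H_def)
  also have "\<dots> = (\<Sum>k\<le>n. K * v k * (Hc (of_nat k + r - s) - H - Hc (r - s)))"
    by (simp add: sum_distrib_left sum_subtractf sum.distrib algebra_simps)
  also have "\<dots> = (\<Sum>k=0..n. (-1)^(n-k) * of_nat ((2*n+1) choose (2*k+1))
            / ((of_nat (n-k) + s) * cbinom (of_nat n + r) (of_nat (n-k) + s))
            * (Hc (of_nat k + r - s) - Hc (of_nat n + r) - Hc (r - s)))"
    unfolding atLeast0AtMost K_def v_def H_def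
    by (intro sum.cong refl, subst right_coefficient_pochhammer) (use s rs in auto)
  finally show ?thesis .
qed

end
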